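(* Let $S,P,Q$ be pairwise disjoint finite sets and $\mathcal{M}_{SP}$, $\mathcal{M}_{PQ}$ matroids on $S\uplus P$, $P\uplus Q$ which are $\{S,P\}$-complete and $\{P,Q\}$-complete respectively. Put $\mathcal{M}_{SQ}:=\mathcal{M}_{SP}\leftrightarrow\mathcal{M}_{PQ}$. 1. If $\mathcal{M}_{SP}$ and $\mathcal{M}_{PQ}$ are compatible, then $\mathcal{M}_{SQ}$ is $\{S,Q\}$-complete, with $\mathcal{E}_S(\mathcal{M}_{SP})=\mathcal{E}_S(\mathcal{M}_{SQ})$ and $\mathcal{E}_Q(\mathcal{M}_{PQ})=\mathcal{E}_Q(\mathcal{M}_{SQ})$. 2. If every block of $\mathcal{E}_P(\mathcal{M}_{PQ})$ is a union of blocks of $\mathcal{E}_P(\mathcal{M}^*_{SP})$, then $\mathcal{M}_{PQ}=\mathcal{M}^*_{SP}\leftrightarrow\mathcal{M}_{SQ}$. 3. If $Q=\emptyset$ (so $\mathcal{M}_{PQ}=\mathcal{M}_P$ is a matroid on $P$) and the collection of bases of $\mathcal{M}_P$ is a union of blocks of $\mathcal{E}_P(\mathcal{M}^*_{SP})$, then $\mathcal{M}_P=\mathcal{M}^*_{SP}\leftrightarrow(\mathcal{M}_{SP}\leftrightarrow\mathcal{M}_P)$.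
   Context: Matroids are on finite sets, given by their bases; $\mathcal{M}^*$ is the dual. $\mathcal{M}\times T$ is the contraction (matroid on $T$ whose bases are the minimal sets $b\cap T$, $b$ a base); $\mathbf{0}_X$ has only base $\emptyset$; $\oplus$ direct sum. For matroids on the same set, $\mathcal{M}_1\vee\mathcal{M}_2$ has bases the maximal sets $b_1\cup b_2$. For $\mathcal{M}_A$ on $A$ and $\mathcal{M}_B$ on $B$, the linking is $\mathcal{M}_A\leftrightarrow\mathcal{M}_B:=((\mathcal{M}_A\oplus\mathbf{0}_{B-A})\vee(\mathcal{M}_B\oplus\mathbf{0}_{A-B}))\times((A-B)\cup(B-A))$. A matroid $\mathcal{M}_{AB}$ on $A\uplus B$ is $\{A,B\}$-complete if whenever $b_A,b'_A\subseteq A$, $b_B,b'_B\subseteq B$ and $b_A\uplus b_B$, $b_A\uplus b'_B$, $b'_A\uplus b_B$ are bases, then $b'_A\uplus b'_B$ is a base (every matroid on $P$ is $\{P,\emptyset\}$-complete; $\mathcal{M}$ is complete iff $\mathcal{M}^*$ is). For an $\{A,B\}$-complete $\mathcal{M}_{AB}$: an $A$-part is $X\subseteq A$ with $X\uplus Y$ a base for some $Y\subseteq B$; $X\sim X'$ iff there is $Y\subseteq B$ with $X\uplus Y$ and $X'\uplus Y$ both bases (an equivalence relation on $A$-parts); $\mathcal{E}_A(\mathcal{M}_{AB})$ is the set of equivalence classes (blocks), each a family of subsets of $A$. $\mathcal{M}_{SP}$ and $\mathcal{M}_{PQ}$ are called compatible iff $\mathcal{E}_P(\mathcal{M}^*_{SP})=\mathcal{E}_P(\mathcal{M}_{PQ})$.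 *)

theory Defs
  imports Main
begin

type_synonym 'a matroid = "'a set \<times> 'a set set"

definition ground :: "'a matroid \<Rightarrow> 'a set" where "ground M = fst M"
definition bases :: "'a matroid \<Rightarrow> 'a set set" where "bases M = snd M"

definition is_matroid :: "'a matroid \<Rightarrow> bool" where
  "is_matroid M \<longleftrightarrow> finite (ground M) \<and> bases M \<noteq> {} \<and>
     (\<forall>b\<in>bases M. b \<subseteq> ground M) \<and>
     (\<forall>b1\<in>bases M. \<forall>b2\<in>bases M. \<forall>x\<in>b1 - b2.
        \<exists>y\<in>b2 - b1. insert y (b1 - {x}) \<in> bases M)"

definition dual :: "'a matroid \<Rightarrow> 'a matroid" where
  "dual M = (ground M, {ground M - b | b. b \<in> bases M})"

definition contract :: "'a matroid \<Rightarrow> 'a set \<Rightarrow> 'a matroid" where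
  "contract M T = (T, {c. (\<exists>b\<in>bases M. c = b \<inter> T) \<and>
       \<not> (\<exists>b\<in>bases M. b \<inter> T \<subset> c)})"

definition zero_matroid :: "'a set \<Rightarrow> 'a matroid" where
  "zero_matroid X = (X, {{}})"

definition dsum :: "'a matroid \<Rightarrow> 'a matroid \<Rightarrow> 'a matroid" where
  "dsum M1 M2 = (ground M1 \<union> ground M2,
      {b1 \<union> b2 | b1 b2. b1 \<in> bases M1 \<and> b2 \<in> bases M2})"

definition munion :: "'a matroid \<Rightarrow> 'a matroid \<Rightarrow> 'a matroid" where
  "munion M1 M2 = (ground M1,
     {c. (\<exists>b1\<in>bases M1. \<exists>b2\<in>bases M2. c = b1 \<union> b2) \<and>
         \<not> (\<exists>b1\<in>bases M1. \<exists>b2\<in>bases M2. c \<subset> b1 \<union> b2)})"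

definition linking :: "'a matroid \<Rightarrow> 'a matroid \<Rightarrow> 'a matroid" where
  "linking MA MB =
     (let A = ground MA; B = ground MB in
      contract (munion (dsum MA (zero_matroid (B - A))) (dsum MB (zero_matroid (A - B))))
               ((A - B) \<union> (B - A)))"

definition complete :: "'a matroid \<Rightarrow> 'a set \<Rightarrow> 'a set \<Rightarrow> bool" where
  "complete M A B \<longleftrightarrow>
     (\<forall>bA bA' bB bB'. bA \<subseteq> A \<and> bA' \<subseteq> A \<and> bB \<subseteq> B \<and> bB' \<subseteq> B \<and>
        bA \<union> bB \<in> bases M \<and> bA \<union> bB' \<in> bases M \<and> bA' \<union> bB \<in> bases M
        \<longrightarrow> bA' \<union> bB' \<in> bases M)"

definition part :: "'a matroid \<Rightarrow> 'a set \<Rightarrow> 'a set \<Rightarrow> bool" where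
  "part M A X \<longleftrightarrow> X \<subseteq> A \<and> (\<exists>Y. Y \<subseteq> ground M - A \<and> X \<union> Y \<in> bases M)"

definition part_equiv :: "'a matroid \<Rightarrow> 'a set \<Rightarrow> 'a set \<Rightarrow> 'a set \<Rightarrow> bool" where
  "part_equiv M A X X' \<longleftrightarrow> X \<subseteq> A \<and> X' \<subseteq> A \<and>
     (\<exists>Y. Y \<subseteq> ground M - A \<and> X \<union> Y \<in> bases M \<and> X' \<union> Y \<in> bases M)"

definition blocks :: "'a matroid \<Rightarrow> 'a set \<Rightarrow> 'a set set set" where
  "blocks M A = {{X'. part_equiv M A X X'} | X. part M A X}"

end

theory Submission
  imports Defs
begin

text \<open>
  Suppose every \<open>P\<close>-part of \<open>M\<^sub>P\<^sub>Q\<close> is the complement in \<open>P\<close> of a \<open>P\<close>-part of \<open>M\<^sub>S\<^sub>P\<close>.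
  Then in the union defining \<open>M\<^sub>S\<^sub>P \<leftrightarrow> M\<^sub>P\<^sub>Q\<close> the maximal sets \<open>a \<union> b\<close> are exactly the disjoint
  ones (an overlap can be exchanged away), and by equicardinality of bases the minimal traces on
  \<open>S \<union> Q\<close> come from pairs with \<open>a \<inter> P = P - b\<close>. So the bases of \<open>M\<^sub>S\<^sub>Q\<close> are the sets
  \<open>(a - P) \<union> (b - P)\<close> glued along complementary \<open>P\<close>-parts. If moreover the blocks of \<open>M\<^sub>P\<^sub>Q\<close> are
  unions of blocks of \<open>M\<^sup>*\<^sub>S\<^sub>P\<close>, then by completeness of \<open>M\<^sub>P\<^sub>Q\<close> the \<open>P\<close>-part of a base of
  \<open>M\<^sub>P\<^sub>Q\<close> may be replaced by any dual-equivalent one; gluing \<open>M\<^sup>*\<^sub>S\<^sub>P\<close> to \<open>M\<^sub>S\<^sub>Q\<close> along \<open>S\<close>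
  therefore recovers exactly the bases of \<open>M\<^sub>P\<^sub>Q\<close>. Under compatibility the exchange works in both
  directions, so the \<open>S\<close>- and \<open>Q\<close>-parts of bases of \<open>M\<^sub>S\<^sub>Q\<close> can be varied independently within
  blocks, which gives completeness and the two block identities. For \<open>Q = {}\<close> the only block of
  \<open>M\<^sub>P\<close> is its set of bases, so the third claim is an instance of the second.
\<close>

section \<open>Bases of a matroid\<close>

lemma bases_pair [simp]: "bases (G, B) = B"
  and ground_pair [simp]: "ground (G, B) = G"
  by (simp_all add: bases_def ground_def)

lemma matroid_eqI: "ground M = ground M' \<Longrightarrow> bases M = bases M' \<Longrightarrow> M = M'"
  by (simp add: ground_def bases_def prod_eq_iff)

lemma base_subset_ground: "is_matroid M \<Longrightarrow> b \<in> bases M \<Longrightarrow> b \<subseteq> ground M"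
  unfolding is_matroid_def by blast

lemma finite_base: "is_matroid M \<Longrightarrow> b \<in> bases M \<Longrightarrow> finite b"
  unfolding is_matroid_def by (meson finite_subset)

lemma base_exchange:
  "is_matroid M \<Longrightarrow> b1 \<in> bases M \<Longrightarrow> b2 \<in> bases M \<Longrightarrow> x \<in> b1 - b2 \<Longrightarrow>
    \<exists>y\<in>b2 - b1. insert y (b1 - {x}) \<in> bases M"
  unfolding is_matroid_def by blast

lemma card_bases_eq:
  assumes M: "is_matroid M" and b1: "b1 \<in> bases M" and b2: "b2 \<in> bases M"
  shows "card b1 = card b2"
  using b1
proof (induction "card (b1 - b2)" arbitrary: b1 rule: less_induct)
  case less
  have fin: "finite b1" using finite_base[OF M less.prems] .
  show ?case
  proof (cases "b1 \<subseteq> b2")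
    case True
    have "b2 \<subseteq> b1"
    proof
      fix x assume "x \<in> b2"
      show "x \<in> b1"
        using base_exchange[OF M b2 less.prems, of x] True \<open>x \<in> b2\<close> by blast
    qed
    with True show ?thesis by simp
  next
    case False
    then obtain x where x: "x \<in> b1 - b2" by blast
    then obtain y where y: "y \<in> b2 - b1" and b1': "insert y (b1 - {x}) \<in> bases M"
      using base_exchange[OF M less.prems b2] by blast
    have "insert y (b1 - {x}) - b2 = (b1 - b2) - {x}" using x y by auto
    moreover have "card ((b1 - b2) - {x}) < card (b1 - b2)"
      using fin x by (intro card_Diff1_less) auto
    ultimately have "card (insert y (b1 - {x}) - b2) < card (b1 - b2)" by simp
    then have "card (insert y (b1 - {x})) = card b2" using less.hyps b1' by blast
    moreover have "card (insert y (b1 - {x})) = Suc (card (b1 - {x}))"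
      using fin y by (intro card_insert_disjoint) auto
    moreover have "Suc (card (b1 - {x})) = card b1"
      using fin x by (intro card_Suc_Diff1) auto
    ultimately show ?thesis by simp
  qed
qed

lemma exists_base_between:
  assumes M: "is_matroid M" and b1: "b1 \<in> bases M" "b1 \<subseteq> A" and I: "I \<subseteq> A"
    and b0: "b0 \<in> bases M" "I \<subseteq> b0"
  shows "\<exists>b\<in>bases M. I \<subseteq> b \<and> b \<subseteq> A"
  using b0
proof (induction "card (b0 - A)" arbitrary: b0 rule: less_induct)
  case less
  show ?case
  proof (cases "b0 \<subseteq> A")
    case True
    with less.prems show ?thesis by blast
  next
    case False
    then obtain x where x: "x \<in> b0 - A" by blast
    with b1 obtain y where y: "y \<in> b1 - b0" and b0': "insert y (b0 - {x}) \<in> bases M"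
      using base_exchange[OF M less.prems(1) b1(1), of x] by blast
    have "insert y (b0 - {x}) - A = (b0 - A) - {x}" using x y b1 by auto
    moreover have "card ((b0 - A) - {x}) < card (b0 - A)"
      using finite_base[OF M less.prems(1)] x by (intro card_Diff1_less) auto
    ultimately have "card (insert y (b0 - {x}) - A) < card (b0 - A)" by simp
    moreover have "I \<subseteq> insert y (b0 - {x})" using less.prems I x by blast
    ultimately show ?thesis using less.hyps b0' by blast
  qed
qed

lemma base_adopt_trace:
  assumes M: "is_matroid M" and a: "a \<in> bases M" and a': "a' \<in> bases M" "a \<inter> P \<subseteq> a' \<inter> P"
  shows "\<exists>a''\<in>bases M. a'' \<inter> P = a' \<inter> P \<and> a'' - P \<subseteq> a - P"
proof -
  have spans: "a \<subseteq> (a - P) \<union> (a' \<inter> P)" using a' by blast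
  obtain a'' where "a'' \<in> bases M" "a' \<inter> P \<subseteq> a''" "a'' \<subseteq> (a - P) \<union> (a' \<inter> P)"
    using exists_base_between[OF M a spans _ a'(1)] by blast
  then show ?thesis by blast
qed

lemma base_exchange_dual:
  assumes M: "is_matroid M" and b1: "b1 \<in> bases M" and b2: "b2 \<in> bases M" and x: "x \<in> b2 - b1"
  shows "\<exists>y\<in>b1 - b2. insert x (b1 - {y}) \<in> bases M"
proof -
  obtain b where b: "b \<in> bases M" "insert x (b1 \<inter> b2) \<subseteq> b" "b \<subseteq> insert x b1"
    using exists_base_between[OF M b1, of "insert x b1" "insert x (b1 \<inter> b2)" b2] x b2 by blast
  have fin: "finite b1" using finite_base[OF M b1] .
  have "Suc (card (b - {x})) = card b"
    using b(2) finite_base[OF M b(1)] by (intro card_Suc_Diff1) auto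
  then have "card (b - {x}) + 1 = card b1" using card_bases_eq[OF M b(1) b1] by simp
  moreover have sub: "b - {x} \<subseteq> b1" using b(3) by blast
  moreover have "card (b1 - (b - {x})) = card b1 - card (b - {x})"
    using card_Diff_subset[OF finite_subset[OF sub fin] sub] .
  ultimately have "card (b1 - (b - {x})) = 1" by simp
  then obtain y where y: "b1 - (b - {x}) = {y}" by (rule card_1_singletonE)
  then have "b = insert x (b1 - {y})" using b(2) sub x by blast
  moreover have "y \<in> b1 - b2" using y b(2) x by blast
  ultimately show ?thesis using b(1) by blast
qed

lemma ground_dual [simp]: "ground (dual M) = ground M"
  and bases_dual: "bases (dual M) = {ground M - b | b. b \<in> bases M}"
  by (simp_all add: dual_def)

lemma bases_dual_iff:
  assumes "is_matroid M" "X \<subseteq> ground M"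
  shows "X \<in> bases (dual M) \<longleftrightarrow> ground M - X \<in> bases M"
proof -
  have "ground M - (ground M - b) = b" if "b \<in> bases M" for b
    using base_subset_ground[OF assms(1) that] by blast
  then show ?thesis using assms(2) unfolding bases_dual by (auto simp: double_diff)
qed

lemma is_matroid_dual:
  assumes M: "is_matroid M" shows "is_matroid (dual M)"
proof -
  have "\<exists>y\<in>(ground M - b2) - (ground M - b1). insert y ((ground M - b1) - {x}) \<in> bases (dual M)"
    if b1: "b1 \<in> bases M" and b2: "b2 \<in> bases M" and x: "x \<in> (ground M - b1) - (ground M - b2)"
    for b1 b2 x
  proof -
    obtain y where y: "y \<in> b1 - b2" "insert x (b1 - {y}) \<in> bases M"
      using base_exchange_dual[OF M b1 b2] x by blast
    have "insert y ((ground M - b1) - {x}) = ground M - insert x (b1 - {y})"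
      using y(1) x base_subset_ground[OF M b1] by auto
    then show ?thesis using y base_subset_ground[OF M b1] by (auto simp: bases_dual)
  qed
  then show ?thesis using M unfolding is_matroid_def bases_dual by auto
qed

section \<open>Parts, blocks and completeness\<close>

lemma part_iff_part_equiv: "part M A X \<longleftrightarrow> part_equiv M A X X"
  unfolding part_def part_equiv_def by blast

lemma blocks_eqI: "part_equiv M A = part_equiv M' A \<Longrightarrow> blocks M A = blocks M' A"
  unfolding blocks_def part_iff_part_equiv by simp

lemma blocks_ground:
  assumes "is_matroid M" "ground M = A"
  shows "blocks M A = {bases M}"
proof -
  have "part_equiv M A X X' \<longleftrightarrow> X \<in> bases M \<and> X' \<in> bases M" for X X'
    using assms base_subset_ground[OF assms(1)] unfolding part_equiv_def by fastforce
  moreover have "bases M \<noteq> {}" using assms(1) unfolding is_matroid_def by blast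
  ultimately show ?thesis unfolding blocks_def part_iff_part_equiv by auto
qed

lemma part_equiv_sym: "part_equiv M A X Y \<Longrightarrow> part_equiv M A Y X"
  unfolding part_equiv_def by blast

lemma part_equiv_iff_bases:
  assumes "\<forall>b\<in>bases M. b \<subseteq> ground M"
  shows "part_equiv M A X X' \<longleftrightarrow>
    (\<exists>b\<in>bases M. \<exists>b'\<in>bases M. X = b \<inter> A \<and> X' = b' \<inter> A \<and> b - A = b' - A)"
proof
  assume "part_equiv M A X X'"
  then obtain Y where Y: "X \<subseteq> A" "X' \<subseteq> A" "Y \<subseteq> ground M - A" "X \<union> Y \<in> bases M" "X' \<union> Y \<in> bases M"
    unfolding part_equiv_def by blast
  then have "X = (X \<union> Y) \<inter> A" "X' = (X' \<union> Y) \<inter> A" "(X \<union> Y) - A = (X' \<union> Y) - A" by blast+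
  with Y(4,5) show "\<exists>b\<in>bases M. \<exists>b'\<in>bases M. X = b \<inter> A \<and> X' = b' \<inter> A \<and> b - A = b' - A"
    by blast
next
  assume "\<exists>b\<in>bases M. \<exists>b'\<in>bases M. X = b \<inter> A \<and> X' = b' \<inter> A \<and> b - A = b' - A"
  then obtain b b' where b: "b \<in> bases M" "b' \<in> bases M" "X = b \<inter> A" "X' = b' \<inter> A" "b - A = b' - A"
    by blast
  then have "X \<subseteq> A" "X' \<subseteq> A" "b - A \<subseteq> ground M - A" "X \<union> (b - A) = b" "X' \<union> (b - A) = b'"
    using assms by blast+
  with b(1,2) show "part_equiv M A X X'"
    unfolding part_equiv_def by (intro conjI exI[of _ "b - A"]) simp_all
qed

lemma completeD:
  "complete M A B \<Longrightarrow> X \<subseteq> A \<Longrightarrow> X' \<subseteq> A \<Longrightarrow> Y \<subseteq> B \<Longrightarrow> Y' \<subseteq> B \<Longrightarrow>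
    X \<union> Y \<in> bases M \<Longrightarrow> X \<union> Y' \<in> bases M \<Longrightarrow> X' \<union> Y \<in> bases M \<Longrightarrow> X' \<union> Y' \<in> bases M"
  unfolding complete_def by blast

lemma complete_base_combine:
  assumes c: "complete M A B" and "\<forall>b\<in>bases M. b \<subseteq> A \<union> B"
    and "a1 \<in> bases M" "a2 \<in> bases M" "a3 \<in> bases M" "a1 \<inter> A = a2 \<inter> A" "a1 \<inter> B = a3 \<inter> B"
  shows "(a3 \<inter> A) \<union> (a2 \<inter> B) \<in> bases M"
proof -
  have "(a1 \<inter> A) \<union> (a1 \<inter> B) = a1" "(a1 \<inter> A) \<union> (a2 \<inter> B) = a2" "(a3 \<inter> A) \<union> (a1 \<inter> B) = a3"
    using assms(2-7) by blast+
  with assms(3-5) have "(a1 \<inter> A) \<union> (a1 \<inter> B) \<in> bases M" "(a1 \<inter> A) \<union> (a2 \<inter> B) \<in> bases M"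
    "(a3 \<inter> A) \<union> (a1 \<inter> B) \<in> bases M" by simp_all
  then show ?thesis by (rule completeD[OF c Int_lower2 Int_lower2 Int_lower2 Int_lower2])
qed

lemma part_equiv_trans:
  assumes c: "complete M A B" and g: "ground M = A \<union> B" "A \<inter> B = {}"
    and "part_equiv M A X Y" "part_equiv M A Y Z"
  shows "part_equiv M A X Z"
proof -
  have gB: "ground M - A = B" using g by blast
  obtain V where V: "V \<subseteq> B" "X \<union> V \<in> bases M" "Y \<union> V \<in> bases M" "X \<subseteq> A" "Y \<subseteq> A"
    using assms(4) unfolding part_equiv_def gB by blast
  obtain W where W: "W \<subseteq> B" "Y \<union> W \<in> bases M" "Z \<union> W \<in> bases M" "Z \<subseteq> A"
    using assms(5) unfolding part_equiv_def gB by blast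
  have "X \<union> W \<in> bases M" using completeD[OF c V(5,4) V(1) W(1) V(3) W(2) V(2)] .
  with V W show ?thesis unfolding part_equiv_def gB by blast
qed

lemma part_equiv_of_refining_blocks:
  assumes c: "complete M A B" "ground M = A \<union> B" "A \<inter> B = {}"
    and refines: "\<forall>C\<in>blocks M' A. \<exists>F\<subseteq>blocks M A. C = \<Union>F"
    and X: "part M' A X"
  shows "part M A X" and "part_equiv M A X Y \<Longrightarrow> part_equiv M' A X Y"
proof -
  have "{Y. part_equiv M' A X Y} \<in> blocks M' A" using X unfolding blocks_def by blast
  then obtain F where F: "F \<subseteq> blocks M A" "{Y. part_equiv M' A X Y} = \<Union>F"
    using refines by (auto simp only: Ball_def)
  have "X \<in> {Y. part_equiv M' A X Y}" using X unfolding part_iff_part_equiv by simp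
  then obtain D where D: "D \<in> F" "X \<in> D" using F(2) by blast
  then obtain V where V: "D = {Y. part_equiv M A V Y}" using F(1) unfolding blocks_def by blast
  then have VX: "part_equiv M A V X" using D(2) by blast
  then show "part M A X"
    unfolding part_iff_part_equiv by (rule part_equiv_trans[OF c part_equiv_sym VX])
  assume "part_equiv M A X Y"
  with VX have "part_equiv M A V Y" by (rule part_equiv_trans[OF c])
  with V have "Y \<in> D" by blast
  then show "part_equiv M' A X Y" using D(1) F(2) by blast
qed

lemma complete_dual:
  assumes M: "is_matroid M" "ground M = A \<union> B" and disj: "A \<inter> B = {}" and c: "complete M A B"
  shows "complete (dual M) B A"
  unfolding complete_def
proof (intro allI impI)
  have dual_iff: "V \<union> Z \<in> bases (dual M) \<longleftrightarrow> (A - Z) \<union> (B - V) \<in> bases M"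
    if "V \<subseteq> B" "Z \<subseteq> A" for V Z
  proof -
    have "(A - Z) \<union> (B - V) = ground M - (V \<union> Z)" using that disj M(2) by blast
    moreover have "V \<union> Z \<subseteq> ground M" using that M(2) by blast
    ultimately show ?thesis using bases_dual_iff[OF M(1)] by simp
  qed
  fix V V' Z Z'
  assume "V \<subseteq> B \<and> V' \<subseteq> B \<and> Z \<subseteq> A \<and> Z' \<subseteq> A \<and> V \<union> Z \<in> bases (dual M) \<and>
    V \<union> Z' \<in> bases (dual M) \<and> V' \<union> Z \<in> bases (dual M)"
  then have sub: "V \<subseteq> B" "V' \<subseteq> B" "Z \<subseteq> A" "Z' \<subseteq> A"
    and m: "(A - Z) \<union> (B - V) \<in> bases M" "(A - Z) \<union> (B - V') \<in> bases M" "(A - Z') \<union> (B - V) \<in> bases M"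
    using dual_iff by auto
  from m have "(A - Z') \<union> (B - V') \<in> bases M"
    by (rule completeD[OF c Diff_subset Diff_subset Diff_subset Diff_subset])
  with sub show "V' \<union> Z' \<in> bases (dual M)" using dual_iff by blast
qed

section \<open>Linking along complementary parts\<close>

lemma bases_munion:
  "bases (munion M1 M2) = {c. (\<exists>b1\<in>bases M1. \<exists>b2\<in>bases M2. c = b1 \<union> b2) \<and>
     \<not> (\<exists>b1\<in>bases M1. \<exists>b2\<in>bases M2. c \<subset> b1 \<union> b2)}"
  by (simp add: munion_def)

lemma contract_image:
  "contract M T = (T, {d \<in> (\<lambda>b. b \<inter> T) ` bases M. \<not> (\<exists>e\<in>(\<lambda>b. b \<inter> T) ` bases M. e \<subset> d)})"
  unfolding contract_def by blast

lemma linking_eq_contract_munion: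
  "linking MA MB = contract (munion MA MB) ((ground MA - ground MB) \<union> (ground MB - ground MA))"
  unfolding linking_def Let_def contract_def bases_munion
  by (simp add: dsum_def zero_matroid_def)

lemma card_Un_bases_le:
  assumes MA: "is_matroid MA"
    and MB: "\<forall>b\<in>bases MB. finite b" "\<forall>b\<in>bases MB. \<forall>b'\<in>bases MB. card b = card b'"
    and ab: "a \<in> bases MA" "b \<in> bases MB" "a \<inter> b = {}" and ab': "a' \<in> bases MA" "b' \<in> bases MB"
  shows "card (a' \<union> b') \<le> card (a \<union> b)"
proof -
  have "card (a' \<union> b') \<le> card a' + card b'" by (rule card_Un_le)
  also have "\<dots> = card a + card b"
    using card_bases_eq[OF MA ab'(1) ab(1)] MB(2)[rule_format, OF ab'(2) ab(2)] by simp
  also have "\<dots> = card (a \<union> b)"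
    using card_Un_disjoint[OF finite_base[OF MA ab(1)] MB(1)[rule_format, OF ab(2)] ab(3)] ..
  finally show ?thesis .
qed

text \<open>A common element of \<open>a\<close> and \<open>b\<close> can be exchanged out of \<open>a\<close> for an element outside \<open>b\<close>,
  which enlarges the union.\<close>
lemma bases_munion_eq_disjoint_unions:
  assumes MA: "is_matroid MA"
    and MB: "\<forall>b\<in>bases MB. finite b" "\<forall>b\<in>bases MB. \<forall>b'\<in>bases MB. card b = card b'"
    and misses: "\<forall>b\<in>bases MB. \<exists>a\<in>bases MA. a \<inter> b = {}"
  shows "bases (munion MA MB) = {a \<union> b | a b. a \<in> bases MA \<and> b \<in> bases MB \<and> a \<inter> b = {}}"
proof -
  show ?thesis
  proof (intro equalityI subsetI)
    fix c assume "c \<in> bases (munion MA MB)"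
    then obtain a b where ab: "a \<in> bases MA" "b \<in> bases MB" "c = a \<union> b"
      and max: "\<not> (\<exists>a\<in>bases MA. \<exists>b\<in>bases MB. c \<subset> a \<union> b)"
      unfolding bases_munion by blast
    have "a \<inter> b = {}"
    proof (rule ccontr)
      assume "a \<inter> b \<noteq> {}"
      then obtain e where e: "e \<in> a" "e \<in> b" by blast
      obtain a' where a': "a' \<in> bases MA" "a' \<inter> b = {}" using misses ab(2) by blast
      then obtain f where f: "f \<in> a' - a" "insert f (a - {e}) \<in> bases MA"
        using base_exchange[OF MA ab(1) a'(1), of e] e by blast
      have "c \<subset> insert f (a - {e}) \<union> b" using ab(3) e f a'(2) by blast
      then show False using max f(2) ab(2) by blast
    qed
    then show "c \<in> {a \<union> b | a b. a \<in> bases MA \<and> b \<in> bases MB \<and> a \<inter> b = {}}" using ab by blast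
  next
    fix c assume "c \<in> {a \<union> b | a b. a \<in> bases MA \<and> b \<in> bases MB \<and> a \<inter> b = {}}"
    then obtain a b where ab: "a \<in> bases MA" "b \<in> bases MB" "a \<inter> b = {}" "c = a \<union> b" by blast
    have "\<not> c \<subset> a' \<union> b'" if "a' \<in> bases MA" "b' \<in> bases MB" for a' b'
    proof
      assume "c \<subset> a' \<union> b'"
      moreover have "finite (a' \<union> b')" using finite_base[OF MA that(1)] MB(1) that(2) by blast
      ultimately have "card c < card (a' \<union> b')" by (rule psubset_card_mono[rotated])
      with card_Un_bases_le[OF MA MB ab(1-3) that] ab(4) show False by simp
    qed
    then show "c \<in> bases (munion MA MB)" unfolding bases_munion using ab by blast
  qed
qed

definition glued_bases :: "'a matroid \<Rightarrow> 'a matroid \<Rightarrow> 'a set \<Rightarrow> 'a set set" where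
  "glued_bases MA MB P =
     {(a - P) \<union> (b - P) | a b. a \<in> bases MA \<and> b \<in> bases MB \<and> a \<inter> P = P - b}"

definition disjoint_traces :: "'a matroid \<Rightarrow> 'a matroid \<Rightarrow> 'a set \<Rightarrow> 'a set set" where
  "disjoint_traces MA MB P =
     {(a - P) \<union> (b - P) | a b. a \<in> bases MA \<and> b \<in> bases MB \<and> a \<inter> b = {}}"

context
  fixes S P Q :: "'a set" and MA MB :: "'a matroid"
  assumes disj: "S \<inter> P = {}" "P \<inter> Q = {}" "S \<inter> Q = {}"
    and MA: "is_matroid MA" "ground MA = S \<union> P"
    and MB: "ground MB = P \<union> Q" "finite Q" "\<forall>b\<in>bases MB. b \<subseteq> P \<union> Q"
      "\<forall>b\<in>bases MB. \<forall>b'\<in>bases MB. card b = card b'"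
    and complement: "\<forall>b\<in>bases MB. \<exists>a\<in>bases MA. a \<inter> P = P - b"
begin

private lemma subset_SP: "a \<in> bases MA \<Longrightarrow> a \<subseteq> S \<union> P"
  using base_subset_ground[OF MA(1)] MA(2) by blast

private lemma subset_PQ: "b \<in> bases MB \<Longrightarrow> b \<subseteq> P \<union> Q"
  using MB(3) by blast

private lemma finite_P: "finite P"
  using MA unfolding is_matroid_def by auto

private lemma finite_base_B: "b \<in> bases MB \<Longrightarrow> finite b"
  using subset_PQ finite_P MB(2) by (meson finite_UnI finite_subset)

private lemma disjoint_iff:
  "a \<in> bases MA \<Longrightarrow> b \<in> bases MB \<Longrightarrow> a \<inter> b = {} \<longleftrightarrow> a \<inter> P \<subseteq> P - b"
  using subset_SP[of a] subset_PQ[of b] disj by blast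

private lemma trace_union:
  "a \<in> bases MA \<Longrightarrow> b \<in> bases MB \<Longrightarrow> (a \<union> b) \<inter> (S \<union> Q) = (a - P) \<union> (b - P)"
  using subset_SP[of a] subset_PQ[of b] disj by blast

private lemma linking_eq_minimal_traces:
  "linking MA MB = (S \<union> Q, {d \<in> disjoint_traces MA MB P. \<not> (\<exists>e\<in>disjoint_traces MA MB P. e \<subset> d)})"
proof -
  have misses: "\<forall>b\<in>bases MB. \<exists>a\<in>bases MA. a \<inter> b = {}"
  proof
    fix b assume b: "b \<in> bases MB"
    with complement obtain a where a: "a \<in> bases MA" "a \<inter> P = P - b" by blast
    then have "a \<inter> b = {}" using disjoint_iff[OF a(1) b] by blast
    with a(1) show "\<exists>a\<in>bases MA. a \<inter> b = {}" by blast
  qed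
  have "\<forall>b\<in>bases MB. finite b" using finite_base_B by blast
  then have munion: "bases (munion MA MB) = {a \<union> b | a b. a \<in> bases MA \<and> b \<in> bases MB \<and> a \<inter> b = {}}"
    using bases_munion_eq_disjoint_unions[OF MA(1) _ MB(4) misses] by blast
  have "(\<lambda>c. c \<inter> (S \<union> Q)) ` bases (munion MA MB) = disjoint_traces MA MB P"
  proof (intro equalityI subsetI)
    fix d assume "d \<in> (\<lambda>c. c \<inter> (S \<union> Q)) ` bases (munion MA MB)"
    then obtain a b where ab: "a \<in> bases MA" "b \<in> bases MB" "a \<inter> b = {}" "d = (a \<union> b) \<inter> (S \<union> Q)"
      unfolding munion by blast
    then have "d = (a - P) \<union> (b - P)" using trace_union by simp
    with ab(1-3) show "d \<in> disjoint_traces MA MB P" unfolding disjoint_traces_def by blast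
  next
    fix d assume "d \<in> disjoint_traces MA MB P"
    then obtain a b where ab: "a \<in> bases MA" "b \<in> bases MB" "a \<inter> b = {}" "d = (a - P) \<union> (b - P)"
      unfolding disjoint_traces_def by blast
    then have "d = (a \<union> b) \<inter> (S \<union> Q)" using trace_union by simp
    with ab(1-3) show "d \<in> (\<lambda>c. c \<inter> (S \<union> Q)) ` bases (munion MA MB)"
      unfolding munion by blast
  qed
  moreover have "(ground MA - ground MB) \<union> (ground MB - ground MA) = S \<union> Q"
    using MA(2) MB(1) disj by blast
  ultimately show ?thesis unfolding linking_eq_contract_munion contract_image by simp
qed

private lemma card_disjoint_trace:
  assumes "a \<in> bases MA" "b \<in> bases MB" "a \<inter> b = {}"
  shows "card ((a - P) \<union> (b - P)) + card ((a \<union> b) \<inter> P) = card a + card b"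
proof -
  have "finite (a \<union> b)" using finite_base[OF MA(1) assms(1)] finite_base_B[OF assms(2)] by blast
  then have "card (a \<union> b) = card ((a \<union> b) \<inter> P) + card ((a - P) \<union> (b - P))"
    using card_Int_Diff[of "a \<union> b" P] by (simp only: Un_Diff)
  moreover have "card (a \<union> b) = card a + card b"
    using card_Un_disjoint[OF finite_base[OF MA(1) assms(1)] finite_base_B[OF assms(2)] assms(3)] .
  ultimately show ?thesis by simp
qed

text \<open>All bases of \<open>MA\<close> have the same size, so enlarging the trace on \<open>P\<close> shrinks the one on \<open>S\<close>.\<close>
private lemma smaller_trace:
  assumes a: "a \<in> bases MA" and b: "b \<in> bases MB" and ab: "a \<inter> b = {}" "a \<inter> P \<noteq> P - b"
  shows "\<exists>a''\<in>bases MA. a'' \<inter> P = P - b \<and> a'' - P \<subset> a - P"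
proof -
  obtain a' where a': "a' \<in> bases MA" "a' \<inter> P = P - b" using complement b by blast
  have trace: "a \<inter> P \<subseteq> a' \<inter> P" using a'(2) ab(1) by blast
  obtain a'' where a'': "a'' \<in> bases MA" "a'' \<inter> P = P - b" "a'' - P \<subseteq> a - P"
    using base_adopt_trace[OF MA(1) a a'(1) trace] a'(2) by auto
  have "card (a \<inter> P) < card (a'' \<inter> P)"
    using ab a''(2) finite_P by (intro psubset_card_mono) auto
  moreover have "card a'' = card a" using card_bases_eq[OF MA(1) a''(1) a] .
  ultimately have "card (a'' - P) < card (a - P)"
    using card_Int_Diff[OF finite_base[OF MA(1) a], of P]
      card_Int_Diff[OF finite_base[OF MA(1) a''(1)], of P] by linarith
  then have "a'' - P \<noteq> a - P" by auto
  with a'' show ?thesis by blast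
qed

private lemma minimal_trace_glued:
  assumes d: "d \<in> disjoint_traces MA MB P" and min: "\<not> (\<exists>e\<in>disjoint_traces MA MB P. e \<subset> d)"
  shows "d \<in> glued_bases MA MB P"
proof -
  obtain a b where ab: "a \<in> bases MA" "b \<in> bases MB" "a \<inter> b = {}" "d = (a - P) \<union> (b - P)"
    using d unfolding disjoint_traces_def by blast
  have "a \<inter> P = P - b"
  proof (rule ccontr)
    assume "a \<inter> P \<noteq> P - b"
    then obtain a'' where a'': "a'' \<in> bases MA" "a'' \<inter> P = P - b" "a'' - P \<subset> a - P"
      using smaller_trace[OF ab(1-3)] by blast
    then have "a'' \<inter> b = {}" using disjoint_iff[OF a''(1) ab(2)] by blast
    then have "(a'' - P) \<union> (b - P) \<in> disjoint_traces MA MB P"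
      using a''(1) ab(2) unfolding disjoint_traces_def by blast
    moreover have "(a'' - P) \<union> (b - P) \<subset> d"
      using a''(3) ab(4) subset_SP[OF ab(1)] subset_PQ[OF ab(2)] disj(3) by blast
    ultimately show False using min by blast
  qed
  then show ?thesis unfolding glued_bases_def using ab by blast
qed

private lemma glued_minimal_trace:
  assumes "d \<in> glued_bases MA MB P"
  shows "d \<in> disjoint_traces MA MB P" and "\<not> (\<exists>e\<in>disjoint_traces MA MB P. e \<subset> d)"
proof -
  obtain a b where ab: "a \<in> bases MA" "b \<in> bases MB" "a \<inter> P = P - b" "d = (a - P) \<union> (b - P)"
    using assms unfolding glued_bases_def by blast
  then have "a \<inter> b = {}" using disjoint_iff[OF ab(1,2)] by blast
  moreover have "(a \<union> b) \<inter> P = P" using ab(3) by blast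
  ultimately have card_d: "card d + card P = card a + card b"
    using ab(4) card_disjoint_trace[OF ab(1,2)] by simp
  show "d \<in> disjoint_traces MA MB P"
    using ab \<open>a \<inter> b = {}\<close> unfolding disjoint_traces_def by blast
  have "\<not> e \<subset> d" if e: "e \<in> disjoint_traces MA MB P" for e
  proof
    assume "e \<subset> d"
    obtain a' b' where ab': "a' \<in> bases MA" "b' \<in> bases MB" "a' \<inter> b' = {}" "e = (a' - P) \<union> (b' - P)"
      using e unfolding disjoint_traces_def by blast
    have "card ((a' \<union> b') \<inter> P) \<le> card P" using finite_P by (simp add: card_mono)
    moreover have "finite d" using ab finite_base[OF MA(1) ab(1)] finite_base_B[OF ab(2)] by blast
    then have "card e < card d" using \<open>e \<subset> d\<close> by (simp add: psubset_card_mono)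
    moreover have "card e + card ((a' \<union> b') \<inter> P) = card a + card b"
      using card_disjoint_trace[OF ab'(1-3)] ab'(4) card_bases_eq[OF MA(1) ab'(1) ab(1)]
        MB(4)[rule_format, OF ab'(2) ab(2)] by simp
    ultimately show False using card_d by linarith
  qed
  then show "\<not> (\<exists>e\<in>disjoint_traces MA MB P. e \<subset> d)" by blast
qed

lemma linking_eq_glued: "linking MA MB = (S \<union> Q, glued_bases MA MB P)"
proof -
  have "{d \<in> disjoint_traces MA MB P. \<not> (\<exists>e\<in>disjoint_traces MA MB P. e \<subset> d)} = glued_bases MA MB P"
  proof (intro equalityI subsetI)
    fix d assume "d \<in> {d \<in> disjoint_traces MA MB P. \<not> (\<exists>e\<in>disjoint_traces MA MB P. e \<subset> d)}"
    then show "d \<in> glued_bases MA MB P" using minimal_trace_glued by blast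
  next
    fix d assume "d \<in> glued_bases MA MB P"
    then show "d \<in> {d \<in> disjoint_traces MA MB P. \<not> (\<exists>e\<in>disjoint_traces MA MB P. e \<subset> d)}"
      using glued_minimal_trace by blast
  qed
  then show ?thesis using linking_eq_minimal_traces by simp
qed

end

section \<open>Linking two complete matroids\<close>

locale complete_pair =
  fixes S P Q :: "'a set" and MSP MPQ :: "'a matroid"
  assumes disjoint: "S \<inter> P = {}" "P \<inter> Q = {}" "S \<inter> Q = {}"
    and matroid_SP: "is_matroid MSP" "ground MSP = S \<union> P"
    and matroid_PQ: "is_matroid MPQ" "ground MPQ = P \<union> Q"
    and complete_SP: "complete MSP S P" and complete_PQ: "complete MPQ P Q"
begin

lemma base_SP_subset: "a \<in> bases MSP \<Longrightarrow> a \<subseteq> S \<union> P"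
  using base_subset_ground[OF matroid_SP(1)] matroid_SP(2) by blast

lemma base_PQ_subset: "b \<in> bases MPQ \<Longrightarrow> b \<subseteq> P \<union> Q"
  using base_subset_ground[OF matroid_PQ(1)] matroid_PQ(2) by blast

lemma finite_Q: "finite Q"
  using matroid_PQ unfolding is_matroid_def by auto

lemma complete_dual_SP: "complete (dual MSP) P S"
  using complete_dual[OF matroid_SP disjoint(1) complete_SP] .

lemma base_dual_SP_iff: "c \<in> bases (dual MSP) \<longleftrightarrow> (\<exists>a\<in>bases MSP. c = (S \<union> P) - a)"
  unfolding bases_dual matroid_SP(2) by blast

lemma part_equiv_dual_SP_iff:
  "part_equiv (dual MSP) P Z Z' \<longleftrightarrow>
    (\<exists>a\<in>bases MSP. \<exists>a'\<in>bases MSP. Z = P - a \<and> Z' = P - a' \<and> a - P = a' - P)"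
proof -
  have sub: "\<forall>c\<in>bases (dual MSP). c \<subseteq> ground (dual MSP)"
    using base_subset_ground[OF is_matroid_dual[OF matroid_SP(1)]] by blast
  show ?thesis
  proof
    assume "part_equiv (dual MSP) P Z Z'"
    then obtain c c' where c: "c \<in> bases (dual MSP)" "c' \<in> bases (dual MSP)"
        "Z = c \<inter> P" "Z' = c' \<inter> P" "c - P = c' - P"
      unfolding part_equiv_iff_bases[OF sub] by blast
    then obtain a a' where a: "a \<in> bases MSP" "a' \<in> bases MSP" "c = (S \<union> P) - a" "c' = (S \<union> P) - a'"
      unfolding base_dual_SP_iff by blast
    with c(3-5) base_SP_subset[OF a(1)] base_SP_subset[OF a(2)]
    have "Z = P - a" "Z' = P - a'" "a - P = a' - P" by blast+
    with a(1,2) show "\<exists>a\<in>bases MSP. \<exists>a'\<in>bases MSP. Z = P - a \<and> Z' = P - a' \<and> a - P = a' - P"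
      by blast
  next
    assume "\<exists>a\<in>bases MSP. \<exists>a'\<in>bases MSP. Z = P - a \<and> Z' = P - a' \<and> a - P = a' - P"
    then obtain a a' where a: "a \<in> bases MSP" "a' \<in> bases MSP" "Z = P - a" "Z' = P - a'" "a - P = a' - P"
      by blast
    then have "(S \<union> P) - a \<in> bases (dual MSP)" "(S \<union> P) - a' \<in> bases (dual MSP)"
      unfolding base_dual_SP_iff by blast+
    moreover have "Z = ((S \<union> P) - a) \<inter> P" "Z' = ((S \<union> P) - a') \<inter> P"
      "((S \<union> P) - a) - P = ((S \<union> P) - a') - P"
      using a(3-5) by blast+
    ultimately show "part_equiv (dual MSP) P Z Z'"
      unfolding part_equiv_iff_bases[OF sub] by blast
  qed
qed

lemma part_equiv_SP_iff:
  "part_equiv MSP A X X' \<longleftrightarrow>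
    (\<exists>a\<in>bases MSP. \<exists>a'\<in>bases MSP. X = a \<inter> A \<and> X' = a' \<inter> A \<and> a - A = a' - A)"
  using part_equiv_iff_bases base_subset_ground[OF matroid_SP(1)] by blast

lemma part_equiv_PQ_iff:
  "part_equiv MPQ A Z Z' \<longleftrightarrow>
    (\<exists>b\<in>bases MPQ. \<exists>b'\<in>bases MPQ. Z = b \<inter> A \<and> Z' = b' \<inter> A \<and> b - A = b' - A)"
  using part_equiv_iff_bases base_subset_ground[OF matroid_PQ(1)] by blast

lemma base_SP_Int_S: "a \<in> bases MSP \<Longrightarrow> a \<inter> S = a - P"
  and base_SP_Diff_S: "a \<in> bases MSP \<Longrightarrow> a - S = a \<inter> P"
  using base_SP_subset disjoint(1) by blast+

lemma base_PQ_Int_Q: "b \<in> bases MPQ \<Longrightarrow> b \<inter> Q = b - P"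
  and base_PQ_Diff_Q: "b \<in> bases MPQ \<Longrightarrow> b - Q = b \<inter> P"
  using base_PQ_subset disjoint(2) by blast+

end

locale refining_pair = complete_pair +
  assumes refines: "\<forall>C\<in>blocks MPQ P. \<exists>F\<subseteq>blocks (dual MSP) P. C = \<Union>F"
begin

lemma part_equiv_dual_imp_PQ:
  assumes "part MPQ P Z"
  shows "part (dual MSP) P Z" and "part_equiv (dual MSP) P Z Z' \<Longrightarrow> part_equiv MPQ P Z Z'"
proof -
  have "complete (dual MSP) P S" "ground (dual MSP) = P \<union> S" "P \<inter> S = {}"
    using complete_dual_SP matroid_SP(2) disjoint(1) by auto
  from part_equiv_of_refining_blocks[OF this refines assms]
  show "part (dual MSP) P Z" and "part_equiv (dual MSP) P Z Z' \<Longrightarrow> part_equiv MPQ P Z Z'" .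
qed

lemma complement_base_SP:
  assumes b: "b \<in> bases MPQ"
  shows "\<exists>a\<in>bases MSP. a \<inter> P = P - b"
proof -
  have "part MPQ P (b \<inter> P)"
    unfolding part_iff_part_equiv part_equiv_PQ_iff using b by blast
  then obtain a where "a \<in> bases MSP" "b \<inter> P = P - a"
    using part_equiv_dual_imp_PQ(1) unfolding part_iff_part_equiv part_equiv_dual_SP_iff by blast
  then show ?thesis by blast
qed

lemma base_PQ_swap:
  assumes b: "b \<in> bases MPQ" "b \<inter> P = P - a"
    and a: "a \<in> bases MSP" "a' \<in> bases MSP" "a - P = a' - P"
  shows "(P - a') \<union> (b - P) \<in> bases MPQ"
proof -
  have "part MPQ P (b \<inter> P)"
    unfolding part_iff_part_equiv part_equiv_PQ_iff using b by blast
  moreover have "part_equiv (dual MSP) P (b \<inter> P) (P - a')"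
    unfolding part_equiv_dual_SP_iff using a b(2) by blast
  ultimately have "part_equiv MPQ P (b \<inter> P) (P - a')"
    by (rule part_equiv_dual_imp_PQ(2))
  then obtain b1 b2 where b12: "b1 \<in> bases MPQ" "b2 \<in> bases MPQ" "b1 \<inter> P = b \<inter> P"
      "b2 \<inter> P = P - a'" "b1 - P = b2 - P"
    unfolding part_equiv_PQ_iff by metis
  have "(b2 \<inter> P) \<union> (b \<inter> Q) \<in> bases MPQ"
  proof (rule complete_base_combine[OF complete_PQ _ b12(1) b(1) b12(2)])
    show "\<forall>c\<in>bases MPQ. c \<subseteq> P \<union> Q" using base_PQ_subset by blast
    show "b1 \<inter> P = b \<inter> P" "b1 \<inter> Q = b2 \<inter> Q" using b12 disjoint(2) by blast+
  qed
  moreover have "b \<inter> Q = b - P" using base_PQ_subset[OF b(1)] disjoint(2) by blast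
  ultimately show ?thesis using b12(4) by simp
qed

lemma linking_eq: "linking MSP MPQ = (S \<union> Q, glued_bases MSP MPQ P)"
proof (rule linking_eq_glued[OF disjoint matroid_SP matroid_PQ(2) finite_Q])
  show "\<forall>b\<in>bases MPQ. b \<subseteq> P \<union> Q" using base_PQ_subset by blast
  show "\<forall>b\<in>bases MPQ. \<forall>b'\<in>bases MPQ. card b = card b'" using card_bases_eq[OF matroid_PQ(1)] by blast
  show "\<forall>b\<in>bases MPQ. \<exists>a\<in>bases MSP. a \<inter> P = P - b" using complement_base_SP by blast
qed

lemma glued_base_subset: "d \<in> glued_bases MSP MPQ P \<Longrightarrow> d \<subseteq> S \<union> Q"
  unfolding glued_bases_def using base_SP_subset base_PQ_subset by blast

lemma card_glued_base:
  assumes d: "d \<in> glued_bases MSP MPQ P" and a0: "a0 \<in> bases MSP" and b0: "b0 \<in> bases MPQ"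
  shows "card d + card P = card a0 + card b0"
proof -
  obtain a b where ab: "a \<in> bases MSP" "b \<in> bases MPQ" "a \<inter> P = P - b" "d = (a - P) \<union> (b - P)"
    using d unfolding glued_bases_def by blast
  have fin: "finite a" "finite b" "finite P"
    using finite_base[OF matroid_SP(1) ab(1)] finite_base[OF matroid_PQ(1) ab(2)]
      matroid_SP unfolding is_matroid_def by auto
  have "(a - P) \<inter> (b - P) = {}"
    using base_SP_subset[OF ab(1)] base_PQ_subset[OF ab(2)] disjoint(3) by blast
  then have "card d = card (a - P) + card (b - P)"
    using ab(4) fin by (simp add: card_Un_disjoint)
  moreover have "card P = card (a \<inter> P) + card (b \<inter> P)"
    using ab(3) fin card_Int_Diff[of P b] by (simp add: Int_commute Diff_Diff_Int)
  moreover have "card a = card (a \<inter> P) + card (a - P)" "card b = card (b \<inter> P) + card (b - P)"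
    using card_Int_Diff[OF fin(1)] card_Int_Diff[OF fin(2)] .
  ultimately show ?thesis
    using card_bases_eq[OF matroid_SP(1) ab(1) a0] card_bases_eq[OF matroid_PQ(1) ab(2) b0] by linarith
qed

lemma base_linking_iff:
  "d \<in> bases (linking MSP MPQ) \<longleftrightarrow>
    (\<exists>a\<in>bases MSP. \<exists>b\<in>bases MPQ. a \<inter> P = P - b \<and> d = (a - P) \<union> (b - P))"
  unfolding linking_eq glued_bases_def by auto

lemma linking_dual_linking_eq_glued:
  "linking (dual MSP) (linking MSP MPQ) = (P \<union> Q, glued_bases (dual MSP) (linking MSP MPQ) S)"
proof (rule linking_eq_glued[where S = P and P = S and Q = Q and MA = "dual MSP" and MB = "linking MSP MPQ"])
  show "P \<inter> S = {}" "S \<inter> Q = {}" "P \<inter> Q = {}" using disjoint by blast+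
  show "is_matroid (dual MSP)" "ground (dual MSP) = P \<union> S"
    using is_matroid_dual[OF matroid_SP(1)] matroid_SP(2) by auto
  show "ground (linking MSP MPQ) = S \<union> Q" using linking_eq by simp
  show "finite Q" by (rule finite_Q)
  show "\<forall>d\<in>bases (linking MSP MPQ). d \<subseteq> S \<union> Q"
    using glued_base_subset linking_eq by simp
  show "\<forall>d\<in>bases (linking MSP MPQ). \<forall>d'\<in>bases (linking MSP MPQ). card d = card d'"
  proof (intro ballI)
    fix d d' assume "d \<in> bases (linking MSP MPQ)" "d' \<in> bases (linking MSP MPQ)"
    then have d: "d \<in> glued_bases MSP MPQ P" "d' \<in> glued_bases MSP MPQ P" using linking_eq by simp_all
    obtain a0 where a0: "a0 \<in> bases MSP" using matroid_SP(1) unfolding is_matroid_def by blast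
    obtain b0 where b0: "b0 \<in> bases MPQ" using matroid_PQ(1) unfolding is_matroid_def by blast
    have "card d + card P = card a0 + card b0" "card d' + card P = card a0 + card b0"
      using card_glued_base[OF d(1) a0 b0] card_glued_base[OF d(2) a0 b0] .
    then show "card d = card d'" by simp
  qed
  show "\<forall>d\<in>bases (linking MSP MPQ). \<exists>c\<in>bases (dual MSP). c \<inter> S = S - d"
  proof
    fix d assume "d \<in> bases (linking MSP MPQ)"
    then obtain a b where ab: "a \<in> bases MSP" "b \<in> bases MPQ" "d = (a - P) \<union> (b - P)"
      unfolding base_linking_iff by blast
    have "((S \<union> P) - a) \<inter> S = S - d"
      unfolding ab(3) using base_PQ_subset[OF ab(2)] disjoint by auto
    moreover have "(S \<union> P) - a \<in> bases (dual MSP)" unfolding base_dual_SP_iff using ab(1) by blast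
    ultimately show "\<exists>c\<in>bases (dual MSP). c \<inter> S = S - d" by blast
  qed
qed

lemma glued_bases_dual_linking: "glued_bases (dual MSP) (linking MSP MPQ) S = bases MPQ"
proof (intro equalityI subsetI)
  fix x assume "x \<in> glued_bases (dual MSP) (linking MSP MPQ) S"
  then obtain c d where cd: "c \<in> bases (dual MSP)" "d \<in> bases (linking MSP MPQ)" "c \<inter> S = S - d"
      "x = (c - S) \<union> (d - S)"
    unfolding glued_bases_def by blast
  obtain a' where a': "a' \<in> bases MSP" "c = (S \<union> P) - a'" using cd(1) unfolding base_dual_SP_iff by blast
  obtain a b where ab: "a \<in> bases MSP" "b \<in> bases MPQ" "a \<inter> P = P - b" "d = (a - P) \<union> (b - P)"
    using cd(2) unfolding base_linking_iff by blast
  have "b \<inter> P = P - a" using ab(3) base_PQ_subset[OF ab(2)] by blast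
  moreover have "a - P = a' - P"
    using cd(3) a'(2) ab(4) base_SP_subset[OF ab(1)] base_SP_subset[OF a'(1)] base_PQ_subset[OF ab(2)]
      disjoint by blast
  ultimately have "(P - a') \<union> (b - P) \<in> bases MPQ" by (rule base_PQ_swap[OF ab(2) _ ab(1) a'(1)])
  moreover have "x = (P - a') \<union> (b - P)"
    using cd(4) a'(2) ab(4) base_SP_subset[OF ab(1)] base_PQ_subset[OF ab(2)] disjoint by blast
  ultimately show "x \<in> bases MPQ" by simp
next
  fix b assume b: "b \<in> bases MPQ"
  then obtain a where a: "a \<in> bases MSP" "a \<inter> P = P - b" using complement_base_SP by blast
  have "(S \<union> P) - a \<in> bases (dual MSP)" using a(1) unfolding base_dual_SP_iff by blast
  moreover have "(a - P) \<union> (b - P) \<in> bases (linking MSP MPQ)"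
    unfolding base_linking_iff using a b by blast
  moreover have "((S \<union> P) - a) \<inter> S = S - ((a - P) \<union> (b - P))"
    using base_PQ_subset[OF b] disjoint by blast
  moreover have "b = (((S \<union> P) - a) - S) \<union> (((a - P) \<union> (b - P)) - S)"
    using a(2) base_SP_subset[OF a(1)] base_PQ_subset[OF b] disjoint by blast
  ultimately show "b \<in> glued_bases (dual MSP) (linking MSP MPQ) S"
    unfolding glued_bases_def by blast
qed

lemma linking_dual_linking: "linking (dual MSP) (linking MSP MPQ) = MPQ"
  using linking_dual_linking_eq_glued glued_bases_dual_linking matroid_PQ(2) by (simp add: matroid_eqI)

lemma base_linking_split:
  assumes "X \<subseteq> S" "Y \<subseteq> Q"
  shows "X \<union> Y \<in> bases (linking MSP MPQ) \<longleftrightarrow>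
    (\<exists>a\<in>bases MSP. \<exists>b\<in>bases MPQ. a \<inter> P = P - b \<and> X = a - P \<and> Y = b - P)"
proof -
  have "X \<union> Y = (a - P) \<union> (b - P) \<longleftrightarrow> X = a - P \<and> Y = b - P"
    if "a \<in> bases MSP" "b \<in> bases MPQ" for a b
  proof
    assume eq: "X \<union> Y = (a - P) \<union> (b - P)"
    have "X = (X \<union> Y) \<inter> S" "Y = (X \<union> Y) \<inter> Q" using assms disjoint(3) by blast+
    moreover have "((a - P) \<union> (b - P)) \<inter> S = a - P" "((a - P) \<union> (b - P)) \<inter> Q = b - P"
      using base_SP_subset[OF that(1)] base_PQ_subset[OF that(2)] disjoint by blast+
    ultimately show "X = a - P \<and> Y = b - P" unfolding eq by simp
  qed simp
  then show ?thesis unfolding base_linking_iff by blast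
qed

lemma part_equiv_linking_iff:
  "part_equiv (linking MSP MPQ) A X X' \<longleftrightarrow>
    (\<exists>d\<in>bases (linking MSP MPQ). \<exists>d'\<in>bases (linking MSP MPQ). X = d \<inter> A \<and> X' = d' \<inter> A \<and> d - A = d' - A)"
  by (rule part_equiv_iff_bases) (use glued_base_subset linking_eq in simp)

lemma part_equiv_linkingE:
  assumes "part_equiv (linking MSP MPQ) A X X'"
  obtains a1 b1 a2 b2 where "a1 \<in> bases MSP" "b1 \<in> bases MPQ" "a1 \<inter> P = P - b1"
    "a2 \<in> bases MSP" "b2 \<in> bases MPQ" "a2 \<inter> P = P - b2"
    "X = ((a1 - P) \<union> (b1 - P)) \<inter> A" "X' = ((a2 - P) \<union> (b2 - P)) \<inter> A"
    "(a1 - P) \<union> (b1 - P) - A = (a2 - P) \<union> (b2 - P) - A"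
proof -
  obtain d d' where d: "d \<in> bases (linking MSP MPQ)" "d' \<in> bases (linking MSP MPQ)"
      "X = d \<inter> A" "X' = d' \<inter> A" "d - A = d' - A"
    using assms unfolding part_equiv_linking_iff by blast
  obtain a1 b1 where ab1: "a1 \<in> bases MSP" "b1 \<in> bases MPQ" "a1 \<inter> P = P - b1"
      "d = (a1 - P) \<union> (b1 - P)"
    using d(1) unfolding base_linking_iff by blast
  obtain a2 b2 where ab2: "a2 \<in> bases MSP" "b2 \<in> bases MPQ" "a2 \<inter> P = P - b2"
      "d' = (a2 - P) \<union> (b2 - P)"
    using d(2) unfolding base_linking_iff by blast
  show thesis by (rule that[OF ab1(1-3) ab2(1-3)]) (use d ab1(4) ab2(4) in simp_all)
qed

end

locale compatible_pair = complete_pair +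
  assumes compatible: "blocks (dual MSP) P = blocks MPQ P"
begin

lemma part_equiv_PQ_imp_dual:
  assumes "part (dual MSP) P Z"
  shows "part MPQ P Z" and "part_equiv MPQ P Z Z' \<Longrightarrow> part_equiv (dual MSP) P Z Z'"
proof -
  have "\<forall>C\<in>blocks (dual MSP) P. \<exists>F\<subseteq>blocks MPQ P. C = \<Union>F"
    using compatible by (metis cSup_singleton empty_subsetI insert_subset)
  from part_equiv_of_refining_blocks[OF complete_PQ matroid_PQ(2) disjoint(2) this assms]
  show "part MPQ P Z" and "part_equiv MPQ P Z Z' \<Longrightarrow> part_equiv (dual MSP) P Z Z'" .
qed

end

sublocale compatible_pair \<subseteq> refining_pair
proof
  show "\<forall>C\<in>blocks MPQ P. \<exists>F\<subseteq>blocks (dual MSP) P. C = \<Union>F"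
    using compatible by (metis cSup_singleton empty_subsetI insert_subset)
qed

context compatible_pair
begin

lemma complement_base_PQ:
  assumes a: "a \<in> bases MSP"
  shows "\<exists>b\<in>bases MPQ. b \<inter> P = P - a"
proof -
  have "part (dual MSP) P (P - a)"
    unfolding part_iff_part_equiv part_equiv_dual_SP_iff using a by blast
  then have "part MPQ P (P - a)" by (rule part_equiv_PQ_imp_dual(1))
  then show ?thesis unfolding part_iff_part_equiv part_equiv_PQ_iff by metis
qed

lemma base_SP_swap:
  assumes b: "b \<in> bases MPQ" "b' \<in> bases MPQ" "b - P = b' - P"
    and a: "a \<in> bases MSP" "b \<inter> P = P - a"
  shows "\<exists>a'\<in>bases MSP. a' - P = a - P \<and> a' \<inter> P = P - b'"
proof -
  have "part (dual MSP) P (b \<inter> P)"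
    unfolding part_iff_part_equiv part_equiv_dual_SP_iff using a by blast
  moreover have "part_equiv MPQ P (b \<inter> P) (b' \<inter> P)"
    unfolding part_equiv_PQ_iff using b by blast
  ultimately have "part_equiv (dual MSP) P (b \<inter> P) (b' \<inter> P)"
    by (rule part_equiv_PQ_imp_dual(2))
  then obtain a1 a2 where a12: "a1 \<in> bases MSP" "a2 \<in> bases MSP" "b \<inter> P = P - a1"
      "b' \<inter> P = P - a2" "a1 - P = a2 - P"
    unfolding part_equiv_dual_SP_iff by metis
  have "(a \<inter> S) \<union> (a2 \<inter> P) \<in> bases MSP"
  proof (rule complete_base_combine[OF complete_SP _ a12(1,2) a(1)])
    show "\<forall>c\<in>bases MSP. c \<subseteq> S \<union> P" using base_SP_subset by blast
    show "a1 \<inter> S = a2 \<inter> S" using a12(5) base_SP_Int_S[OF a12(1)] base_SP_Int_S[OF a12(2)] by simp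
    show "a1 \<inter> P = a \<inter> P" using a12(3) a(2) by blast
  qed
  moreover have "((a \<inter> S) \<union> (a2 \<inter> P)) - P = a - P" using base_SP_Int_S[OF a(1)] disjoint(1) by blast
  moreover have "((a \<inter> S) \<union> (a2 \<inter> P)) \<inter> P = P - b'" using a12(4) disjoint(1) by blast
  ultimately show ?thesis by blast
qed

lemma complete_linking: "complete (linking MSP MPQ) S Q"
  unfolding complete_def
proof (intro allI impI)
  fix X X' Y Y'
  assume "X \<subseteq> S \<and> X' \<subseteq> S \<and> Y \<subseteq> Q \<and> Y' \<subseteq> Q \<and> X \<union> Y \<in> bases (linking MSP MPQ) \<and>
    X \<union> Y' \<in> bases (linking MSP MPQ) \<and> X' \<union> Y \<in> bases (linking MSP MPQ)"
  then have sub: "X' \<subseteq> S" "Y' \<subseteq> Q" and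
    "\<exists>a\<in>bases MSP. \<exists>b\<in>bases MPQ. a \<inter> P = P - b \<and> X = a - P \<and> Y = b - P"
    "\<exists>a\<in>bases MSP. \<exists>b\<in>bases MPQ. a \<inter> P = P - b \<and> X = a - P \<and> Y' = b - P"
    "\<exists>a\<in>bases MSP. \<exists>b\<in>bases MPQ. a \<inter> P = P - b \<and> X' = a - P \<and> Y = b - P"
    using base_linking_split by blast+
  then obtain a1 b1 a2 b2 a3 b3 where
    ab1: "a1 \<in> bases MSP" "b1 \<in> bases MPQ" "a1 \<inter> P = P - b1" "X = a1 - P" "Y = b1 - P" and
    ab2: "a2 \<in> bases MSP" "b2 \<in> bases MPQ" "a2 \<inter> P = P - b2" "X = a2 - P" "Y' = b2 - P" and
    ab3: "a3 \<in> bases MSP" "b3 \<in> bases MPQ" "a3 \<inter> P = P - b3" "X' = a3 - P" "Y = b3 - P"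
    by metis
  \<comment> \<open>Move the \<open>Q\<close>-part of \<open>b2\<close> onto the \<open>P\<close>-part of \<open>b1\<close>, then onto that of \<open>b3\<close>.\<close>
  have "b2 \<inter> P = P - a2" using ab2(3) base_PQ_subset[OF ab2(2)] by blast
  then have b4: "(P - a1) \<union> (b2 - P) \<in> bases MPQ"
    using base_PQ_swap[OF ab2(2) _ ab2(1) ab1(1)] ab1(4) ab2(4) by blast
  have "(b3 \<inter> P) \<union> (((P - a1) \<union> (b2 - P)) \<inter> Q) \<in> bases MPQ"
  proof (rule complete_base_combine[OF complete_PQ _ ab1(2) b4 ab3(2)])
    show "\<forall>c\<in>bases MPQ. c \<subseteq> P \<union> Q" using base_PQ_subset by blast
    show "b1 \<inter> P = ((P - a1) \<union> (b2 - P)) \<inter> P" using ab1(3) base_PQ_subset[OF ab1(2)] by blast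
    show "b1 \<inter> Q = b3 \<inter> Q" using ab1(5) ab3(5) base_PQ_Int_Q[OF ab1(2)] base_PQ_Int_Q[OF ab3(2)] by simp
  qed
  moreover have "(b3 \<inter> P) \<union> (((P - a1) \<union> (b2 - P)) \<inter> Q) = (P - a3) \<union> (b2 - P)"
    using ab3(3) base_PQ_subset[OF ab2(2)] base_PQ_subset[OF ab3(2)] disjoint(2) by blast
  ultimately have b5: "(P - a3) \<union> (b2 - P) \<in> bases MPQ" by simp
  have "a3 \<inter> P = P - ((P - a3) \<union> (b2 - P))" "Y' = ((P - a3) \<union> (b2 - P)) - P"
    using ab2(5) by blast+
  with ab3(1,4) b5 show "X' \<union> Y' \<in> bases (linking MSP MPQ)"
    unfolding base_linking_split[OF sub] by blast
qed

lemma part_equiv_linking_S: "part_equiv (linking MSP MPQ) S = part_equiv MSP S"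
proof (intro ext iffI)
  fix X X'
  assume "part_equiv (linking MSP MPQ) S X X'"
  then obtain a1 b1 a2 b2 where ab1: "a1 \<in> bases MSP" "b1 \<in> bases MPQ" "a1 \<inter> P = P - b1"
      and ab2: "a2 \<in> bases MSP" "b2 \<in> bases MPQ" "a2 \<inter> P = P - b2"
      and d: "X = ((a1 - P) \<union> (b1 - P)) \<inter> S" "X' = ((a2 - P) \<union> (b2 - P)) \<inter> S"
        "(a1 - P) \<union> (b1 - P) - S = (a2 - P) \<union> (b2 - P) - S"
    by (rule part_equiv_linkingE)
  have parts: "X = a1 - P" "X' = a2 - P" "b1 - P = b2 - P"
    using d base_SP_subset[OF ab1(1)] base_SP_subset[OF ab2(1)]
      base_PQ_subset[OF ab1(2)] base_PQ_subset[OF ab2(2)] disjoint by blast+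
  have "b1 \<inter> P = P - a1" using ab1(3) base_PQ_subset[OF ab1(2)] by blast
  then obtain a' where a': "a' \<in> bases MSP" "a' - P = a1 - P" "a' \<inter> P = P - b2"
    using base_SP_swap[OF ab1(2) ab2(2) parts(3) ab1(1)] by blast
  have "X = a' \<inter> S" "X' = a2 \<inter> S" "a' - S = a2 - S"
    using parts(1,2) a'(2,3) ab2(3) base_SP_Int_S[OF a'(1)] base_SP_Int_S[OF ab2(1)]
      base_SP_Diff_S[OF a'(1)] base_SP_Diff_S[OF ab2(1)] by simp_all
  with a'(1) ab2(1) show "part_equiv MSP S X X'"
    unfolding part_equiv_SP_iff by blast
next
  fix X X'
  assume "part_equiv MSP S X X'"
  then obtain a a' where a: "a \<in> bases MSP" "a' \<in> bases MSP" "X = a \<inter> S" "X' = a' \<inter> S" "a - S = a' - S"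
    unfolding part_equiv_SP_iff by blast
  obtain b where b: "b \<in> bases MPQ" "b \<inter> P = P - a" using complement_base_PQ[OF a(1)] by blast
  have "a \<inter> P = P - b" "a' \<inter> P = P - b"
    using b(2) a(5) base_SP_Diff_S[OF a(1)] base_SP_Diff_S[OF a(2)] by blast+
  then have "(a - P) \<union> (b - P) \<in> bases (linking MSP MPQ)" "(a' - P) \<union> (b - P) \<in> bases (linking MSP MPQ)"
    unfolding base_linking_iff using a(1,2) b(1) by blast+
  moreover have "X = ((a - P) \<union> (b - P)) \<inter> S" "X' = ((a' - P) \<union> (b - P)) \<inter> S"
    "((a - P) \<union> (b - P)) - S = ((a' - P) \<union> (b - P)) - S"
    using a(3,4) base_SP_subset[OF a(1)] base_SP_subset[OF a(2)] base_PQ_subset[OF b(1)] disjoint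
    by blast+
  ultimately show "part_equiv (linking MSP MPQ) S X X'"
    unfolding part_equiv_linking_iff by blast
qed

lemma part_equiv_linking_Q: "part_equiv (linking MSP MPQ) Q = part_equiv MPQ Q"
proof (intro ext iffI)
  fix W W'
  assume "part_equiv (linking MSP MPQ) Q W W'"
  then obtain a1 b1 a2 b2 where ab1: "a1 \<in> bases MSP" "b1 \<in> bases MPQ" "a1 \<inter> P = P - b1"
      and ab2: "a2 \<in> bases MSP" "b2 \<in> bases MPQ" "a2 \<inter> P = P - b2"
      and d: "W = ((a1 - P) \<union> (b1 - P)) \<inter> Q" "W' = ((a2 - P) \<union> (b2 - P)) \<inter> Q"
        "(a1 - P) \<union> (b1 - P) - Q = (a2 - P) \<union> (b2 - P) - Q"
    by (rule part_equiv_linkingE)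
  have parts: "W = b1 - P" "W' = b2 - P" "a1 - P = a2 - P"
    using d base_SP_subset[OF ab1(1)] base_SP_subset[OF ab2(1)]
      base_PQ_subset[OF ab1(2)] base_PQ_subset[OF ab2(2)] disjoint by blast+
  have "b1 \<inter> P = P - a1" using ab1(3) base_PQ_subset[OF ab1(2)] by blast
  then have b': "(P - a2) \<union> (b1 - P) \<in> bases MPQ"
    using base_PQ_swap[OF ab1(2) _ ab1(1) ab2(1) parts(3)] by blast
  have "W = ((P - a2) \<union> (b1 - P)) \<inter> Q" "W' = b2 \<inter> Q" "((P - a2) \<union> (b1 - P)) - Q = b2 - Q"
    using parts(1,2) ab2(3) base_PQ_subset[OF ab1(2)] base_PQ_subset[OF ab2(2)] disjoint by blast+
  with b' ab2(2) show "part_equiv MPQ Q W W'"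
    unfolding part_equiv_PQ_iff by blast
next
  fix W W'
  assume "part_equiv MPQ Q W W'"
  then obtain b b' where b: "b \<in> bases MPQ" "b' \<in> bases MPQ" "W = b \<inter> Q" "W' = b' \<inter> Q" "b - Q = b' - Q"
    unfolding part_equiv_PQ_iff by blast
  obtain a where a: "a \<in> bases MSP" "a \<inter> P = P - b" using complement_base_SP[OF b(1)] by blast
  have "a \<inter> P = P - b'"
    using a(2) b(5) base_PQ_Diff_Q[OF b(1)] base_PQ_Diff_Q[OF b(2)] by blast
  with a b(1,2) have "(a - P) \<union> (b - P) \<in> bases (linking MSP MPQ)" "(a - P) \<union> (b' - P) \<in> bases (linking MSP MPQ)"
    unfolding base_linking_iff by blast+
  moreover have "W = ((a - P) \<union> (b - P)) \<inter> Q" "W' = ((a - P) \<union> (b' - P)) \<inter> Q"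
    "((a - P) \<union> (b - P)) - Q = ((a - P) \<union> (b' - P)) - Q"
    using b(3,4) base_SP_subset[OF a(1)] base_PQ_subset[OF b(1)] base_PQ_subset[OF b(2)] disjoint
    by blast+
  ultimately show "part_equiv (linking MSP MPQ) Q W W'"
    unfolding part_equiv_linking_iff by blast
qed

end

theorem theorem13:
  fixes S P Q :: "'a set" and MSP MPQ :: "'a matroid"
  assumes fin: "finite S" "finite P" "finite Q"
    and disj: "S \<inter> P = {}" "P \<inter> Q = {}" "S \<inter> Q = {}"
    and mSP: "is_matroid MSP" "ground MSP = S \<union> P"
    and mPQ: "is_matroid MPQ" "ground MPQ = P \<union> Q"
    and cSP: "complete MSP S P"
    and cPQ: "complete MPQ P Q"
  defines "MSQ \<equiv> linking MSP MPQ"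
  shows
    "(blocks (dual MSP) P = blocks MPQ P \<longrightarrow>
        complete MSQ S Q \<and> blocks MSP S = blocks MSQ S \<and> blocks MPQ Q = blocks MSQ Q)
     \<and> ((\<forall>C\<in>blocks MPQ P. \<exists>F\<subseteq>blocks (dual MSP) P. C = \<Union>F) \<longrightarrow>
        MPQ = linking (dual MSP) MSQ)
     \<and> (Q = {} \<and> (\<exists>F\<subseteq>blocks (dual MSP) P. bases MPQ = \<Union>F) \<longrightarrow>
        MPQ = linking (dual MSP) (linking MSP MPQ))"
proof -
  interpret complete_pair S P Q MSP MPQ
    using disj mSP mPQ cSP cPQ by unfold_locales
  have part1: "complete MSQ S Q \<and> blocks MSP S = blocks MSQ S \<and> blocks MPQ Q = blocks MSQ Q"
    if "blocks (dual MSP) P = blocks MPQ P"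
  proof -
    interpret compatible_pair S P Q MSP MPQ using that by unfold_locales
    show ?thesis unfolding MSQ_def
      using complete_linking blocks_eqI[OF part_equiv_linking_S] blocks_eqI[OF part_equiv_linking_Q]
      by simp
  qed
  have part2: "MPQ = linking (dual MSP) MSQ"
    if "\<forall>C\<in>blocks MPQ P. \<exists>F\<subseteq>blocks (dual MSP) P. C = \<Union>F"
  proof -
    interpret refining_pair S P Q MSP MPQ using that by unfold_locales
    show ?thesis unfolding MSQ_def by (rule linking_dual_linking[symmetric])
  qed
  have "\<forall>C\<in>blocks MPQ P. \<exists>F\<subseteq>blocks (dual MSP) P. C = \<Union>F"
    if "Q = {}" and "\<exists>F\<subseteq>blocks (dual MSP) P. bases MPQ = \<Union>F"
    using that blocks_ground[OF mPQ(1)] mPQ(2) by simp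
  with part1 part2 show ?thesis unfolding MSQ_def by blast
qed

end
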